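(* Let $A\in\mathbb{R}^{m\times n}$, let $a=\max_{i,j}|A_{i,j}|$, and let $(U,V)$ be an iterative play system for $A$. Let $s,t\ge 0$ be integers and suppose that every row index and every column index is $E$-eligible in the interval $[s,s+t]$. Then $$\max V(s+t)-\min U(s+t)\le 4a(t+1).$$
   Context: An iterative play system $(U,V)$ for $A\in\mathbb{R}^{m\times n}$ is a pair of sequences $U(0),U(1),\dots\in\mathbb{R}^n$ and $V(0),V(1),\dots\in\mathbb{R}^m$ such that $\min U(0)=\max V(0)$ and, for each $t$, $U(t+1)=U(t)+A_{i(t),*}$ and $V(t+1)=V(t)+A_{*,j(t)}$ for some indices $i(t)\in\{1,\dots,m\}$, $j(t)\in\{1,\dots,n\}$, where $A_{i,*}$ is the $i$th row and $A_{*,j}$ the $j$th column of $A$. Write $u_j(t)$, $v_i(t)$ for the entries of $U(t)$, $V(t)$, and $\max$, $\min$ of a vector for its largest/smallest entry. With $a=\max_{i,j}|A_{i,j}|$, row $i$ is $E$-eligible in $[t,t']$ if there exists an integer $t_1\in[t,t']$ with $v_i(t_1)\ge\max V(t_1)-2a$; column $j$ is $E$-eligible in $[t,t']$ if there exists $t_1\in[t,t']$ with $u_j(t_1)\le\min U(t_1)+2a$. *)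

theory Defs
  imports Complex_Main
begin

text \<open>Matrices are A :: nat => nat => real with rows 0..<m and columns 0..<n.
  Vectors U(t) in R^n are U t :: nat => real restricted to 0..<n; V(t) in R^m likewise on 0..<m.\<close>

definition vmax :: "nat \<Rightarrow> (nat \<Rightarrow> real) \<Rightarrow> real" where
  "vmax k x = Max (x ` {0..<k})"

definition vmin :: "nat \<Rightarrow> (nat \<Rightarrow> real) \<Rightarrow> real" where
  "vmin k x = Min (x ` {0..<k})"

definition amax :: "nat \<Rightarrow> nat \<Rightarrow> (nat \<Rightarrow> nat \<Rightarrow> real) \<Rightarrow> real" where
  "amax m n A = Max {\<bar>A i j\<bar> | i j. i < m \<and> j < n}"

definition iterative_play_system ::
  "nat \<Rightarrow> nat \<Rightarrow> (nat \<Rightarrow> nat \<Rightarrow> real) \<Rightarrow> (nat \<Rightarrow> nat \<Rightarrow> real) \<Rightarrow> (nat \<Rightarrow> nat \<Rightarrow> real) \<Rightarrow> bool" where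
  "iterative_play_system m n A U V \<longleftrightarrow>
     vmin n (U 0) = vmax m (V 0) \<and>
     (\<forall>t. \<exists>i<m. \<exists>j<n.
        (\<forall>k<n. U (Suc t) k = U t k + A i k) \<and>
        (\<forall>l<m. V (Suc t) l = V t l + A l j))"

definition row_E_eligible ::
  "nat \<Rightarrow> nat \<Rightarrow> (nat \<Rightarrow> nat \<Rightarrow> real) \<Rightarrow> (nat \<Rightarrow> nat \<Rightarrow> real) \<Rightarrow> nat \<Rightarrow> nat \<Rightarrow> nat \<Rightarrow> bool" where
  "row_E_eligible m n A V i t t' \<longleftrightarrow>
     (\<exists>t1. t \<le> t1 \<and> t1 \<le> t' \<and> V t1 i \<ge> vmax m (V t1) - 2 * amax m n A)"

definition col_E_eligible ::
  "nat \<Rightarrow> nat \<Rightarrow> (nat \<Rightarrow> nat \<Rightarrow> real) \<Rightarrow> (nat \<Rightarrow> nat \<Rightarrow> real) \<Rightarrow> nat \<Rightarrow> nat \<Rightarrow> nat \<Rightarrow> bool" where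
  "col_E_eligible m n A U j t t' \<longleftrightarrow>
     (\<exists>t1. t \<le> t1 \<and> t1 \<le> t' \<and> U t1 j \<le> vmin n (U t1) + 2 * amax m n A)"

end

theory Submission
  imports Defs
begin

text \<open>Each coordinate of U and V moves by at most a per step, so a row (column) that was
  2a-close to the maximum of V (minimum of U) at some time in [s, s+t] is still
  2a(t+1)-close at time T = s+t. It remains to find a row i and a column j with
  V(T)_i \<le> U(T)_j. For T = 0 any pair works, since max V(0) = min U(0). For T > 0, summing
  V(T) - U(T) over the pairs played before T, the two contributions of A are the same
  double sum and cancel, leaving a sum of V(0)_i - U(0)_j \<le> 0; hence some played pair has
  V(T)_i \<le> U(T)_j.\<close>

lemma amax_ge:
  assumes "i < m" "j < n"
  shows "\<bar>A i j\<bar> \<le> amax m n A"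
proof -
  have entries: "{\<bar>A i j\<bar> | i j. i < m \<and> j < n} = (\<lambda>(i, j). \<bar>A i j\<bar>) ` ({..<m} \<times> {..<n})"
    by auto
  show ?thesis
    unfolding amax_def entries by (rule Max_ge) (use assms in auto)
qed

lemma vmax_ge: "i < k \<Longrightarrow> x i \<le> vmax k x"
  unfolding vmax_def by (rule Max_ge) auto

lemma vmin_le: "i < k \<Longrightarrow> vmin k x \<le> x i"
  unfolding vmin_def by (rule Min_le) auto

lemma vmax_le_shift:
  assumes "0 < k" and "\<And>l. l < k \<Longrightarrow> x l \<le> y l + d"
  shows "vmax k x \<le> vmax k y + d"
proof -
  have "x l \<le> vmax k y + d" if "l < k" for l
    using assms(2)[OF that] vmax_ge[OF that, of y] by linarith
  then show ?thesis
    unfolding vmax_def[of k x] using assms(1) by auto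
qed

lemma vmin_ge_shift:
  assumes "0 < k" and "\<And>l. l < k \<Longrightarrow> y l - d \<le> x l"
  shows "vmin k y - d \<le> vmin k x"
proof -
  have "vmin k y - d \<le> x l" if "l < k" for l
    using assms(2)[OF that] vmin_le[OF that, of y] by linarith
  then show ?thesis
    unfolding vmin_def[of k x] using assms(1) by auto
qed

locale play_sequence =
  fixes m n :: nat and A :: "nat \<Rightarrow> nat \<Rightarrow> real" and U V :: "nat \<Rightarrow> nat \<Rightarrow> real"
    and I J :: "nat \<Rightarrow> nat"
  assumes row_played: "I t < m" and col_played: "J t < n"
    and U_step: "k < n \<Longrightarrow> U (Suc t) k = U t k + A (I t) k"
    and V_step: "l < m \<Longrightarrow> V (Suc t) l = V t l + A l (J t)"
begin

lemma amax_nonneg: "0 \<le> amax m n A"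
  using amax_ge[OF row_played col_played] abs_ge_zero order_trans by metis

lemma U_diff: "k < n \<Longrightarrow> t \<le> t' \<Longrightarrow> U t' k - U t k = (\<Sum>\<sigma> = t..<t'. A (I \<sigma>) k)"
  using sum_Suc_diff'[of t t' "\<lambda>\<sigma>. U \<sigma> k"] by (simp add: U_step)

lemma V_diff: "l < m \<Longrightarrow> t \<le> t' \<Longrightarrow> V t' l - V t l = (\<Sum>\<sigma> = t..<t'. A l (J \<sigma>))"
  using sum_Suc_diff'[of t t' "\<lambda>\<sigma>. V \<sigma> l"] by (simp add: V_step)

lemma U_drift: "k < n \<Longrightarrow> t \<le> t' \<Longrightarrow> \<bar>U t' k - U t k\<bar> \<le> real (t' - t) * amax m n A"
  using order_trans[OF sum_abs sum_bounded_above[of "{t..<t'}" "\<lambda>\<sigma>. \<bar>A (I \<sigma>) k\<bar>"]]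
  by (simp add: U_diff amax_ge row_played)

lemma V_drift: "l < m \<Longrightarrow> t \<le> t' \<Longrightarrow> \<bar>V t' l - V t l\<bar> \<le> real (t' - t) * amax m n A"
  using order_trans[OF sum_abs sum_bounded_above[of "{t..<t'}" "\<lambda>\<sigma>. \<bar>A l (J \<sigma>)\<bar>"]]
  by (simp add: V_diff amax_ge col_played)

lemma E_eligible_row_near_max:
  assumes "i < m" and "row_E_eligible m n A V i s (s + t)"
  shows "vmax m (V (s + t)) - V (s + t) i \<le> 2 * amax m n A * (real t + 1)"
proof -
  define a where "a = amax m n A"
  obtain t1 where t1: "s \<le> t1" "t1 \<le> s + t" "vmax m (V t1) - 2 * a \<le> V t1 i"
    using assms(2) unfolding row_E_eligible_def a_def by blast
  have "real (s + t - t1) * a \<le> real t * a"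
    using t1(1) amax_nonneg unfolding a_def by (intro mult_right_mono) auto
  then have drift: "\<bar>V (s + t) l - V t1 l\<bar> \<le> real t * a" if "l < m" for l
    using V_drift[OF that t1(2)] unfolding a_def by linarith
  have "vmax m (V (s + t)) \<le> vmax m (V t1) + real t * a"
    using assms(1) by (intro vmax_le_shift) (auto dest!: drift simp: abs_le_iff)
  then show ?thesis
    using t1(3) drift[OF assms(1)] unfolding a_def by (auto simp: abs_le_iff algebra_simps)
qed

lemma E_eligible_col_near_min:
  assumes "j < n" and "col_E_eligible m n A U j s (s + t)"
  shows "U (s + t) j - vmin n (U (s + t)) \<le> 2 * amax m n A * (real t + 1)"
proof -
  define a where "a = amax m n A"
  obtain t1 where t1: "s \<le> t1" "t1 \<le> s + t" "U t1 j \<le> vmin n (U t1) + 2 * a"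
    using assms(2) unfolding col_E_eligible_def a_def by blast
  have "real (s + t - t1) * a \<le> real t * a"
    using t1(1) amax_nonneg unfolding a_def by (intro mult_right_mono) auto
  then have drift: "\<bar>U (s + t) k - U t1 k\<bar> \<le> real t * a" if "k < n" for k
    using U_drift[OF that t1(2)] unfolding a_def by linarith
  have "vmin n (U t1) - real t * a \<le> vmin n (U (s + t))"
    using assms(1) by (intro vmin_ge_shift) (auto dest!: drift simp: abs_le_iff)
  then show ?thesis
    using t1(3) drift[OF assms(1)] unfolding a_def by (auto simp: abs_le_iff algebra_simps)
qed

lemma played_gap_sum:
  "(\<Sum>\<tau><T. V T (I \<tau>) - U T (J \<tau>)) = (\<Sum>\<tau><T. V 0 (I \<tau>) - U 0 (J \<tau>))"
proof -
  have "(\<Sum>\<tau><T. V T (I \<tau>) - U T (J \<tau>))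
      = (\<Sum>\<tau><T. V 0 (I \<tau>) - U 0 (J \<tau>))
        + ((\<Sum>\<tau><T. \<Sum>\<sigma><T. A (I \<tau>) (J \<sigma>)) - (\<Sum>\<tau><T. \<Sum>\<sigma><T. A (I \<sigma>) (J \<tau>)))"
    using V_diff[OF row_played, of 0 T] U_diff[OF col_played, of 0 T]
    by (simp add: atLeast0LessThan algebra_simps sum.distrib sum_subtractf)
  then show ?thesis
    using sum.swap by simp
qed

lemma exists_row_col_V_le_U:
  assumes "vmax m (V 0) \<le> vmin n (U 0)"
  shows "\<exists>i<m. \<exists>j<n. V T i \<le> U T j"
proof (cases "T = 0")
  case True
  then show ?thesis
    using assms vmax_ge[OF row_played] vmin_le[OF col_played] row_played col_played
    by (meson order_trans)
next
  case False
  have "(\<Sum>\<tau><T. V T (I \<tau>) - U T (J \<tau>)) \<le> 0"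
    unfolding played_gap_sum
    using assms vmax_ge[OF row_played] vmin_le[OF col_played]
    by (intro sum_nonpos) (meson diff_le_0_iff_le order_trans)
  then obtain \<tau> where "V T (I \<tau>) \<le> U T (J \<tau>)"
    using False sum_pos[of "{..<T}" "\<lambda>\<tau>. V T (I \<tau>) - U T (J \<tau>)"]
    by (metis diff_gt_0_iff_gt finite_lessThan lessThan_empty_iff not_le bot_nat_0.extremum_unique)
  then show ?thesis
    using row_played col_played by blast
qed

end

lemma iterative_play_system_play_sequence:
  assumes "iterative_play_system m n A U V"
  obtains I J where "play_sequence m n A U V I J"
  using assms unfolding iterative_play_system_def play_sequence_def by metis

theorem lemma3:
  fixes m n :: nat and A :: "nat \<Rightarrow> nat \<Rightarrow> real"
    and U V :: "nat \<Rightarrow> nat \<Rightarrow> real" and s t :: nat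
  assumes "m \<ge> 1" and "n \<ge> 1"
    and "iterative_play_system m n A U V"
    and "\<forall>i<m. row_E_eligible m n A V i s (s + t)"
    and "\<forall>j<n. col_E_eligible m n A U j s (s + t)"
  shows "vmax m (V (s + t)) - vmin n (U (s + t)) \<le> 4 * amax m n A * (real t + 1)"
proof -
  obtain I J where "play_sequence m n A U V I J"
    using iterative_play_system_play_sequence[OF assms(3)] .
  then interpret play_sequence m n A U V I J .
  have "vmax m (V 0) \<le> vmin n (U 0)"
    using assms(3) unfolding iterative_play_system_def by simp
  then obtain i j where "i < m" "j < n" "V (s + t) i \<le> U (s + t) j"
    using exists_row_col_V_le_U by blast
  with E_eligible_row_near_max[of i s t] E_eligible_col_near_min[of j s t] assms(4,5)
  show ?thesis
    by (simp add: algebra_simps)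
qed

end
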